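(* Let $\mathbf v=(v_1,\dots,v_m)$ and $\mathbf k=(k_1,\dots,k_m)$ be $m$-tuples of positive integers with $\mathbf v\ge\mathbf k$, where $m\ge2$. Then \[ C(\mathbf v,\mathbf k,2)\ \ge\ \max_{\substack{1\le i,j\le m\\ i\neq j}}\left\lceil\frac{v_i}{k_i}\left\lceil\frac{v_j}{k_j}\right\rceil\right\rceil. \]
   Context: Let $X_1,\dots,X_m$ be pairwise disjoint sets with $|X_i|=v_i$. A block is an $m$-tuple $(B_1,\dots,B_m)$ with $B_i\subseteq X_i$, $|B_i|=k_i$. An $m$-tuple of sets $(T_1,\dots,T_m)$ is $(\mathbf v,\mathbf k,2)$-admissible if $T_i\subseteq X_i$, $|T_i|\le k_i$ and $\sum|T_i|=2$; it is contained in a block if $T_i\subseteq B_i$ for all $i$. A ${\rm GC}(\mathbf v,\mathbf k,2)$ is a finite family (repetitions allowed) of blocks containing every admissible tuple in at least one block; $C(\mathbf v,\mathbf k,2)$ is the minimum number of blocks. *)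

theory Defs
  imports Complex_Main
begin

text \<open>Ground sets: X_i is modelled as {0..<v i} for i \<in> {1..m} (pairwise disjoint
  by being tagged with the index i). An m-tuple of sets is a function
  nat \<Rightarrow> nat set, only the components i \<in> {1..m} being relevant.\<close>

definition is_block :: "nat \<Rightarrow> (nat \<Rightarrow> nat) \<Rightarrow> (nat \<Rightarrow> nat) \<Rightarrow> (nat \<Rightarrow> nat set) \<Rightarrow> bool" where
  "is_block m v k B \<longleftrightarrow> (\<forall>i\<in>{1..m}. B i \<subseteq> {0..<v i} \<and> card (B i) = k i)"

definition admissible2 :: "nat \<Rightarrow> (nat \<Rightarrow> nat) \<Rightarrow> (nat \<Rightarrow> nat) \<Rightarrow> (nat \<Rightarrow> nat set) \<Rightarrow> bool" where
  "admissible2 m v k T \<longleftrightarrow> (\<forall>i\<in>{1..m}. T i \<subseteq> {0..<v i} \<and> card (T i) \<le> k i)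
      \<and> (\<Sum>i=1..m. card (T i)) = 2"

definition contained_in :: "nat \<Rightarrow> (nat \<Rightarrow> nat set) \<Rightarrow> (nat \<Rightarrow> nat set) \<Rightarrow> bool" where
  "contained_in m T B \<longleftrightarrow> (\<forall>i\<in>{1..m}. T i \<subseteq> B i)"

text \<open>A GC(v,k,2): a finite family (list, repetitions allowed) of blocks covering
  every admissible tuple.\<close>
definition is_GC :: "nat \<Rightarrow> (nat \<Rightarrow> nat) \<Rightarrow> (nat \<Rightarrow> nat) \<Rightarrow> (nat \<Rightarrow> nat set) list \<Rightarrow> bool" where
  "is_GC m v k F \<longleftrightarrow> (\<forall>B\<in>set F. is_block m v k B)
     \<and> (\<forall>T. admissible2 m v k T \<longrightarrow> (\<exists>B\<in>set F. contained_in m T B))"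

definition C2 :: "nat \<Rightarrow> (nat \<Rightarrow> nat) \<Rightarrow> (nat \<Rightarrow> nat) \<Rightarrow> nat" where
  "C2 m v k = (LEAST n. \<exists>F. is_GC m v k F \<and> length F = n)"

end

theory Submission
  imports Defs "HOL-Library.FuncSet"
begin

text \<open>Fix a point x of X_i and count the blocks d(x) whose i-th part contains x. Pairing x with
  every point of X_j shows that these blocks must cover X_j, so d(x) \<ge> \<lceil>v_j/k_j\<rceil>.
  Summing d(x) over X_i counts every block exactly k_i times, hence
  |F| k_i \<ge> v_i \<lceil>v_j/k_j\<rceil>.\<close>

lemma exists_superset_with_card:
  assumes "finite A" "T \<subseteq> A" "card T \<le> n" "n \<le> card A"
  shows "\<exists>B. T \<subseteq> B \<and> B \<subseteq> A \<and> card B = n"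
proof -
  have "n - card T \<le> card (A - T)"
    using assms by (simp add: card_Diff_subset finite_subset)
  then obtain S where S: "S \<subseteq> A - T" "card S = n - card T"
    by (meson obtain_subset_with_card_n)
  have "finite T" "finite S"
    using S assms by (auto intro: finite_subset)
  then have "card (T \<union> S) = n"
    using S assms by (subst card_Un_disjoint) auto
  then show ?thesis
    using S assms by (intro exI[of _ "T \<union> S"]) auto
qed

lemma is_GC_exists:
  assumes "\<forall>i\<in>{1..m}. 0 < k i \<and> k i \<le> v i"
  shows "\<exists>F. is_GC m v k F"
proof -
  define S where "S = {B. is_block m v k B \<and> (\<forall>i. i \<notin> {1..m} \<longrightarrow> B i = undefined)}"
  have "S \<subseteq> PiE {1..m} (\<lambda>i. Pow {0..<v i})"
    unfolding S_def is_block_def PiE_def extensional_def by auto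
  then have "finite S"
    by (rule finite_subset) (intro finite_PiE; auto)
  then obtain F where setF: "set F = S"
    using finite_list by blast
  have "\<exists>B\<in>S. contained_in m T B" if T: "admissible2 m v k T" for T
  proof -
    have "\<forall>i\<in>{1..m}. \<exists>Bi. T i \<subseteq> Bi \<and> Bi \<subseteq> {0..<v i} \<and> card Bi = k i"
      using T assms unfolding admissible2_def by (intro ballI exists_superset_with_card) auto
    then obtain g where g: "\<forall>i\<in>{1..m}. T i \<subseteq> g i \<and> g i \<subseteq> {0..<v i} \<and> card (g i) = k i"
      by metis
    let ?B = "\<lambda>i. if i \<in> {1..m} then g i else undefined"
    have "?B \<in> S" "contained_in m T ?B"
      unfolding S_def is_block_def contained_in_def using g by auto
    then show ?thesis by blast
  qed
  then have "is_GC m v k F"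
    unfolding is_GC_def setF by (auto simp: S_def)
  then show ?thesis by blast
qed

text \<open>Existence of a covering matters: over an empty set, \<open>LEAST\<close> would yield an unspecified value.\<close>

lemma C2_attained:
  assumes "\<forall>i\<in>{1..m}. 0 < k i \<and> k i \<le> v i"
  obtains F where "is_GC m v k F" "length F = C2 m v k"
proof -
  have "\<exists>n F. is_GC m v k F \<and> length F = n"
    using is_GC_exists[OF assms] by blast
  from LeastI_ex[OF this] obtain F where "is_GC m v k F" "length F = C2 m v k"
    unfolding C2_def by blast
  then show ?thesis by (rule that)
qed

lemma admissible2_pair:
  assumes "i \<in> {1..m}" "j \<in> {1..m}" "i \<noteq> j" "x < v i" "y < v j" "0 < k i" "0 < k j"
  shows "admissible2 m v k (\<lambda>l. if l = i then {x} else if l = j then {y} else {})"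
proof -
  have "(\<Sum>l=1..m. card (if l = i then {x} else if l = j then {y} else {}))
      = (\<Sum>l=1..m. (if l = i then 1 else 0) + (if l = j then 1 else 0))"
    by (rule sum.cong) (use assms(3) in auto)
  also have "\<dots> = 2"
    using assms(1,2) by (simp add: sum.distrib)
  finally show ?thesis
    unfolding admissible2_def using assms by auto
qed

lemma is_GC_covers_pair:
  assumes "is_GC m v k F" "i \<in> {1..m}" "j \<in> {1..m}" "i \<noteq> j"
    and "x < v i" "y < v j" "0 < k i" "0 < k j"
  shows "\<exists>n<length F. x \<in> (F!n) i \<and> y \<in> (F!n) j"
proof -
  obtain B where "B \<in> set F" "contained_in m (\<lambda>l. if l = i then {x} else if l = j then {y} else {}) B"
    using assms admissible2_pair[OF assms(2-)] unfolding is_GC_def by blast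
  then show ?thesis
    using assms(2-4) unfolding contained_in_def in_set_conv_nth by force
qed

lemma card_le_card_mult_of_cover:
  assumes "finite S" "Y \<subseteq> (\<Union>n\<in>S. G n)" "\<And>n. n \<in> S \<Longrightarrow> finite (G n) \<and> card (G n) \<le> c"
  shows "card Y \<le> card S * c"
proof -
  have "card Y \<le> card (\<Union>n\<in>S. G n)"
    using assms by (intro card_mono) auto
  also have "\<dots> \<le> (\<Sum>n\<in>S. card (G n))"
    by (rule card_UN_le[OF assms(1)])
  also have "\<dots> \<le> card S * c"
    using sum_bounded_above[of S "\<lambda>n. card (G n)" c] assms(3) by simp
  finally show ?thesis .
qed

lemma sum_card_occurrences:
  assumes "\<And>n. n < length L \<Longrightarrow> L!n \<subseteq> A \<and> card (L!n) = c" "finite A"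
  shows "(\<Sum>x\<in>A. card {n. n < length L \<and> x \<in> L!n}) = length L * c"
proof -
  have "(\<Sum>x\<in>A. card {n. n < length L \<and> x \<in> L!n})
      = (\<Sum>x\<in>A. \<Sum>n<length L. if x \<in> L!n then 1 else 0)"
    by (simp add: sum.If_cases lessThan_def Collect_conj_eq)
  also have "\<dots> = (\<Sum>n<length L. \<Sum>x\<in>A. if x \<in> L!n then 1 else 0)"
    by (rule sum.swap)
  also have "\<dots> = (\<Sum>n<length L. c)"
  proof (rule sum.cong)
    fix n assume "n \<in> {..<length L}"
    then have "L!n \<subseteq> A" "card (L!n) = c" using assms(1) by auto
    then show "(\<Sum>x\<in>A. if x \<in> L!n then 1 else 0) = c"
      using assms(2) by (simp add: sum.If_cases Int_absorb1)
  qed simp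
  finally show ?thesis by simp
qed

lemma ceiling_divide_le:
  fixes b d :: real and L :: int
  assumes "b \<le> of_int L * d" "0 < d"
  shows "\<lceil>b / d\<rceil> \<le> L"
  using assms by (simp add: ceiling_le_iff divide_le_eq)

lemma is_GC_length_ge:
  assumes GC: "is_GC m v k F" and ij: "i \<in> {1..m}" "j \<in> {1..m}" "i \<noteq> j"
    and pos: "0 < k i" "0 < k j"
  shows "\<lceil>(real (v i) / real (k i)) * of_int \<lceil>real (v j) / real (k j)\<rceil>\<rceil> \<le> int (length F)"
proof -
  define r where "r = \<lceil>real (v j) / real (k j)\<rceil>"
  define deg where "deg x = card {n. n < length F \<and> x \<in> (F!n) i}" for x
  have block_parts: "(F!n) l \<subseteq> {0..<v l} \<and> card ((F!n) l) = k l" if "n < length F" "l \<in> {1..m}" for n l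
    using GC that unfolding is_GC_def is_block_def by auto
  have deg_ge: "r \<le> int (deg x)" if "x < v i" for x
  proof -
    have "card {0..<v j} \<le> deg x * k j"
      unfolding deg_def
    proof (rule card_le_card_mult_of_cover)
      show "{0..<v j} \<subseteq> (\<Union>n\<in>{n. n < length F \<and> x \<in> (F!n) i}. (F!n) j)"
        using is_GC_covers_pair[OF GC ij \<open>x < v i\<close> _ pos] by auto
    qed (use block_parts[OF _ ij(2)] in \<open>auto intro: finite_subset\<close>)
    then have "real (v j) \<le> of_int (int (deg x)) * real (k j)"
      by (metis card_atLeastLessThan diff_zero of_int_of_nat_eq of_nat_le_iff of_nat_mult)
    then show ?thesis
      unfolding r_def using ceiling_divide_le pos by simp
  qed
  have "(\<Sum>x<v i. deg x) = length F * k i"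
    unfolding deg_def
    using sum_card_occurrences[where L = "map (\<lambda>B. B i) F" and A = "{..<v i}" and c = "k i"]
      block_parts[OF _ ij(1)] by (auto simp: atLeast0LessThan cong: conj_cong)
  then have "(\<Sum>x<v i. int (deg x)) = int (length F * k i)"
    by (metis of_nat_sum)
  moreover have "int (v i) * r \<le> (\<Sum>x<v i. int (deg x))"
    using sum_mono[of "{..<v i}" "\<lambda>_. r" "\<lambda>x. int (deg x)"] deg_ge by simp
  ultimately have "int (v i) * r \<le> int (length F * k i)"
    by simp
  then have "real (v i) * of_int r \<le> of_int (int (length F)) * real (k i)"
    by (metis of_int_le_iff of_int_mult of_int_of_nat_eq of_nat_mult)
  from ceiling_divide_le[OF this] show ?thesis
    unfolding r_def using pos by (simp add: times_divide_eq_left mult.commute)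
qed

theorem corollary5p3:
  fixes m :: nat and v k :: "nat \<Rightarrow> nat"
  assumes "m \<ge> 2"
    and "\<forall>i\<in>{1..m}. 0 < k i \<and> k i \<le> v i"
  shows "int (C2 m v k) \<ge>
    Max {\<lceil>(real (v i) / real (k i)) * of_int \<lceil>real (v j) / real (k j)\<rceil>\<rceil> | i j.
           i \<in> {1..m} \<and> j \<in> {1..m} \<and> i \<noteq> j}"
proof -
  obtain F where F: "is_GC m v k F" "length F = C2 m v k"
    using C2_attained[OF assms(2)] .
  let ?f = "\<lambda>(i,j). \<lceil>(real (v i) / real (k i)) * of_int \<lceil>real (v j) / real (k j)\<rceil>\<rceil>"
  let ?M = "{\<lceil>(real (v i) / real (k i)) * of_int \<lceil>real (v j) / real (k j)\<rceil>\<rceil> | i j.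
           i \<in> {1..m} \<and> j \<in> {1..m} \<and> i \<noteq> j}"
  have "finite ?M"
    by (rule finite_subset[of _ "?f ` ({1..m} \<times> {1..m})"]) force+
  moreover have "?f (1, 2) \<in> ?M"
    using assms(1) by force
  ultimately show ?thesis
    using is_GC_length_ge[OF F(1)] assms(2) F(2) by (subst Max_le_iff) auto
qed

end
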